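(* Let $F=(A,R)$ be an abstract argumentation framework. If $S$ is an initial set of $F$, then there is a strongly connected component $F'=(A',R')$ of $F$ with $S\subseteq A'$.
   Context: An abstract argumentation framework is a pair $F=(A,R)$ with $A$ a finite set and $R\subseteq A\times A$ ($a\to b$ means $(a,b)\in R$). $S\subseteq A$ is admissible if it is conflict-free and every attacker of an element of $S$ is attacked by some element of $S$. An initial set is a non-empty admissible set with no non-empty admissible proper subset. For $X\subseteq A$, $F|_X=(X,R\cap(X\times X))$. A strongly connected component (SCC) of $F$ is a framework $F|_{A'}$ such that there is a directed path in $F|_{A'}$ between any two arguments of $A'$ and $A'$ is maximal with this property. *)

theory Defs
  imports Main
begin

definition AF :: "'a set \<Rightarrow> 'a rel \<Rightarrow> bool" where
  "AF A R \<longleftrightarrow> finite A \<and> R \<subseteq> A \<times> A"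

definition conflict_free :: "'a rel \<Rightarrow> 'a set \<Rightarrow> bool" where
  "conflict_free R S \<longleftrightarrow> (\<forall>a\<in>S. \<forall>b\<in>S. (a, b) \<notin> R)"

definition admissible :: "'a set \<Rightarrow> 'a rel \<Rightarrow> 'a set \<Rightarrow> bool" where
  "admissible A R S \<longleftrightarrow> S \<subseteq> A \<and> conflict_free R S \<and>
     (\<forall>a\<in>S. \<forall>b. (b, a) \<in> R \<longrightarrow> (\<exists>c\<in>S. (c, b) \<in> R))"

definition initial_set :: "'a set \<Rightarrow> 'a rel \<Rightarrow> 'a set \<Rightarrow> bool" where
  "initial_set A R S \<longleftrightarrow> S \<noteq> {} \<and> admissible A R S \<and>
     (\<forall>T. T \<subset> S \<and> T \<noteq> {} \<longrightarrow> \<not> admissible A R T)"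

definition restrict_rel :: "'a rel \<Rightarrow> 'a set \<Rightarrow> 'a rel" where
  "restrict_rel R X = R \<inter> (X \<times> X)"

definition strongly_connected :: "'a rel \<Rightarrow> 'a set \<Rightarrow> bool" where
  "strongly_connected R X \<longleftrightarrow> (\<forall>a\<in>X. \<forall>b\<in>X. (a, b) \<in> (restrict_rel R X)\<^sup>*)"

definition is_SCC :: "'a set \<Rightarrow> 'a rel \<Rightarrow> 'a set \<Rightarrow> bool" where
  "is_SCC A R A' \<longleftrightarrow> A' \<subseteq> A \<and> A' \<noteq> {} \<and> strongly_connected R A' \<and>
     (\<forall>B. A' \<subset> B \<and> B \<subseteq> A \<longrightarrow> \<not> strongly_connected R B)"

end

theory Submission
  imports Defs
begin

text \<open>If \<open>S\<close> is initial and \<open>a \<in> S\<close>, the elements of \<open>S\<close> from which \<open>a\<close> is reachable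
  still form an admissible set: a defender of such an element attacks one of its attackers,
  so it reaches \<open>a\<close> as well. By minimality this set is all of \<open>S\<close>, and symmetrically \<open>a\<close>
  reaches every element of \<open>S\<close>. Hence \<open>S\<close> lies in the mutual-reachability class of \<open>a\<close>,
  which is an SCC.\<close>

definition scc_of :: "'a rel \<Rightarrow> 'a \<Rightarrow> 'a set" where
  "scc_of R a = {z. (a, z) \<in> R\<^sup>* \<and> (z, a) \<in> R\<^sup>*}"

lemma scc_of_self: "a \<in> scc_of R a"
  by (simp add: scc_of_def)

lemma scc_of_subset:
  assumes "R \<subseteq> A \<times> A" "a \<in> A"
  shows "scc_of R a \<subseteq> A"
proof
  fix x assume "x \<in> scc_of R a"
  then have "(x, a) \<in> R\<^sup>*" by (simp add: scc_of_def)
  then show "x \<in> A"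
    by (cases rule: converse_rtranclE) (use assms in auto)
qed

text \<open>Every node on an \<open>R\<close>-path from \<open>x\<close> to \<open>y\<close> lies in the class of \<open>a\<close> once
  \<open>x\<close> and \<open>y\<close> do, so the path stays inside it.\<close>

lemma rtrancl_restrict_scc_of:
  assumes "(x, y) \<in> R\<^sup>*" "(y, a) \<in> R\<^sup>*" "(a, x) \<in> R\<^sup>*"
  shows "(x, y) \<in> (restrict_rel R (scc_of R a))\<^sup>*"
  using assms
proof (induction rule: rtrancl_induct)
  case base
  then show ?case by simp
next
  case (step y z)
  have ya: "(y, a) \<in> R\<^sup>*"
    using step.hyps(2) step.prems(1) by (rule converse_rtrancl_into_rtrancl)
  have ay: "(a, y) \<in> R\<^sup>*"
    using step.prems(2) step.hyps(1) by (rule rtrancl_trans)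
  have "(a, z) \<in> R\<^sup>*"
    using ay step.hyps(2) by (rule rtrancl_into_rtrancl)
  with step.hyps(2) step.prems(1) ya ay have "(y, z) \<in> restrict_rel R (scc_of R a)"
    by (simp add: restrict_rel_def scc_of_def)
  with step.IH[OF ya step.prems(2)] show ?case by (rule rtrancl_into_rtrancl)
qed

lemma strongly_connected_scc_of: "strongly_connected R (scc_of R a)"
  unfolding strongly_connected_def
proof (intro ballI)
  fix x y assume "x \<in> scc_of R a" "y \<in> scc_of R a"
  then have xa: "(x, a) \<in> R\<^sup>*" and ay: "(a, y) \<in> R\<^sup>*" and ya: "(y, a) \<in> R\<^sup>*"
    and ax: "(a, x) \<in> R\<^sup>*" by (simp_all add: scc_of_def)
  from rtrancl_trans[OF xa ay] ya ax
  show "(x, y) \<in> (restrict_rel R (scc_of R a))\<^sup>*" by (rule rtrancl_restrict_scc_of)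
qed

lemma strongly_connected_subset_scc_of:
  assumes "strongly_connected R B" "a \<in> B"
  shows "B \<subseteq> scc_of R a"
proof
  fix x assume "x \<in> B"
  have "(restrict_rel R B)\<^sup>* \<subseteq> R\<^sup>*"
    by (rule rtrancl_mono) (auto simp: restrict_rel_def)
  with assms \<open>x \<in> B\<close> show "x \<in> scc_of R a"
    unfolding strongly_connected_def scc_of_def by blast
qed

lemma is_SCC_scc_of:
  assumes "R \<subseteq> A \<times> A" "a \<in> A"
  shows "is_SCC A R (scc_of R a)"
  unfolding is_SCC_def
  using scc_of_subset[OF assms] scc_of_self[of a R] strongly_connected_scc_of[of R a]
    strongly_connected_subset_scc_of[of R _ a]
  by blast

lemma admissible_reaching:
  assumes "admissible A R S"
  shows "admissible A R {y \<in> S. (y, a) \<in> R\<^sup>*}"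
  unfolding admissible_def
proof (intro conjI ballI allI impI)
  show "{y \<in> S. (y, a) \<in> R\<^sup>*} \<subseteq> A" "conflict_free R {y \<in> S. (y, a) \<in> R\<^sup>*}"
    using assms by (auto simp: admissible_def conflict_free_def)
next
  fix y b assume y: "y \<in> {y \<in> S. (y, a) \<in> R\<^sup>*}" and b: "(b, y) \<in> R"
  then obtain c where c: "c \<in> S" "(c, b) \<in> R"
    using assms unfolding admissible_def by blast
  from b y have "(b, a) \<in> R\<^sup>*" by (simp add: converse_rtrancl_into_rtrancl)
  with c have "(c, a) \<in> R\<^sup>*" by (simp add: converse_rtrancl_into_rtrancl)
  with c show "\<exists>c \<in> {y \<in> S. (y, a) \<in> R\<^sup>*}. (c, b) \<in> R" by blast
qed

lemma initial_set_reaches: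
  assumes "initial_set A R S" "a \<in> S" "x \<in> S"
  shows "(x, a) \<in> R\<^sup>*"
proof -
  let ?T = "{y \<in> S. (y, a) \<in> R\<^sup>*}"
  have "admissible A R ?T"
    using assms(1) by (simp add: initial_set_def admissible_reaching)
  moreover have "?T \<noteq> {}"
    using assms(2) by blast
  ultimately have "\<not> ?T \<subset> S"
    using assms(1) unfolding initial_set_def by (meson psubsetE)
  then have "?T = S" by blast
  with assms(3) show ?thesis by blast
qed

lemma initial_set_subset_scc_of:
  assumes "initial_set A R S" "a \<in> S"
  shows "S \<subseteq> scc_of R a"
  using initial_set_reaches[OF assms] initial_set_reaches[OF assms(1) _ assms(2)]
  by (auto simp: scc_of_def)

theorem proposition1:
  fixes A :: "'a set" and R :: "'a rel" and S :: "'a set"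
  assumes "AF A R"
    and "initial_set A R S"
  shows "\<exists>A'. is_SCC A R A' \<and> S \<subseteq> A'"
proof -
  obtain a where a: "a \<in> S"
    using assms(2) unfolding initial_set_def by blast
  have "R \<subseteq> A \<times> A"
    using assms(1) unfolding AF_def by blast
  moreover have "a \<in> A"
    using assms(2) a unfolding initial_set_def admissible_def by blast
  ultimately have "is_SCC A R (scc_of R a)"
    by (rule is_SCC_scc_of)
  with initial_set_subset_scc_of[OF assms(2) a] show ?thesis by blast
qed

end
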